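(* For $n\ge 2$, let $G^2_n$ be the graph obtained from an edge $u_1u_2$ by adding a set $X$ of $n-2$ new vertices, each adjacent to both $u_1$ and $u_2$ (and no other edges). Then $G^2_n$ is $2$-degenerate and $\mathrm{id}^{\leq 3}(G^2_n)=n-1$. Moreover, $\mathrm{conv}^{\leq 3}(G^2_n)=n-1$ if $n$ is even and $\mathrm{conv}^{\leq 3}(G^2_n)=n-2$ if $n$ is odd.
   Context: A graph is $k$-degenerate if its vertices can be ordered so that each vertex has at most $k$ neighbours later in the order. For an oriented graph $D$ and $X\subseteq V(D)$, the inversion of $X$ reverses every arc with both endvertices in $X$; a $(\leq p)$-inversion is the inversion of a set of at most $p$ vertices. $\mathrm{id}^{\leq p}(G)$ is the maximum, over all ordered pairs $(\vec G_1,\vec G_2)$ of orientations of $G$, of the minimum number of $(\leq p)$-inversions transforming $\vec G_1$ into $\vec G_2$. $\mathrm{conv}^{\leq p}(G)$ is the minimum number of $(\leq p)$-inversions transforming an orientation of $G$ into its converse (all arcs reversed); it does not depend on the orientation. *)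

theory Defs
  imports Main
begin

text \<open>Graphs: a vertex set V and a symmetric irreflexive edge relation E \<subseteq> V \<times> V.
  Oriented graphs: sets of arcs (ordered pairs).\<close>

definition k_degenerate :: "'a set \<Rightarrow> ('a \<times> 'a) set \<Rightarrow> nat \<Rightarrow> bool" where
  "k_degenerate V E k \<longleftrightarrow>
     (\<exists>vs. distinct vs \<and> set vs = V \<and>
        (\<forall>i<length vs. card {j. i < j \<and> j < length vs \<and> (vs ! i, vs ! j) \<in> E} \<le> k))"

definition is_orientation :: "('a \<times> 'a) set \<Rightarrow> ('a \<times> 'a) set \<Rightarrow> bool" where
  "is_orientation E D \<longleftrightarrow> D \<subseteq> E \<and> (\<forall>u v. (u, v) \<in> E \<longrightarrow> ((u, v) \<in> D \<longleftrightarrow> (v, u) \<notin> D))"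

definition invert :: "'a set \<Rightarrow> ('a \<times> 'a) set \<Rightarrow> ('a \<times> 'a) set" where
  "invert X D = {(u, v). ((u, v) \<in> D \<and> \<not> (u \<in> X \<and> v \<in> X)) \<or> ((v, u) \<in> D \<and> u \<in> X \<and> v \<in> X)}"

definition inv_dist :: "nat \<Rightarrow> 'a set \<Rightarrow> ('a \<times> 'a) set \<Rightarrow> ('a \<times> 'a) set \<Rightarrow> nat" where
  "inv_dist p V D1 D2 = (LEAST k. \<exists>Xs. length Xs = k \<and>
      (\<forall>X\<in>set Xs. X \<subseteq> V \<and> finite X \<and> card X \<le> p) \<and> fold invert Xs D1 = D2)"

definition id_le :: "nat \<Rightarrow> 'a set \<Rightarrow> ('a \<times> 'a) set \<Rightarrow> nat" where
  "id_le p V E = Max {inv_dist p V D1 D2 | D1 D2. is_orientation E D1 \<and> is_orientation E D2}"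

definition conv_le :: "nat \<Rightarrow> 'a set \<Rightarrow> ('a \<times> 'a) set \<Rightarrow> nat" where
  "conv_le p V E = (let D = (SOME D. is_orientation E D) in inv_dist p V D (converse D))"

text \<open>G^2_n on vertices {0..<n}: u1 = 0, u2 = 1, X = {2..<n}.\<close>
definition G2_V :: "nat \<Rightarrow> nat set" where
  "G2_V n = {..<n}"

definition G2_E :: "nat \<Rightarrow> (nat \<times> nat) set" where
  "G2_E n = (let A = {(0, 1)} \<union> {(0, x) | x. x \<in> {2..<n}} \<union> {(1, x) | x. x \<in> {2..<n}}
             in A \<union> converse A)"

end

theory Submission
  imports Defs
begin

(* Inverting a set reverses the arc uv iff the set contains u and v, so a sequence of inversions
   turns D1 into D2 iff every edge lies in an odd number of the inverted sets exactly when D1 and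
   D2 orient it differently.  Hence n - 1 inversions always suffice: for each x in X a subset of
   {u1, u2, x} repairs the two edges at x, and a final {u1, u2} or empty set repairs u1u2.
   Conversely, a set of at most three vertices contains at most two of the 2(n - 2) edges between
   {u1, u2} and X, and if it contains two of them, it contains an even number of the edges u1x and
   u1u2.  If all edges at X are to be reversed, this forces n - 2 inversions, and n - 1 when the
   total number of reversals of u1u2 and the edges u1x must be odd, i.e. when u1u2 is to be reversed
   iff n is even.  For odd n the converse is reached by n - 2 inversions: {u1, u2, x} followed by
   {u1, y, z} and {u2, y, z} for the remaining vertices of X taken in pairs. *)

definition flip_count :: "'a set list \<Rightarrow> 'a \<Rightarrow> 'a \<Rightarrow> nat" where
  "flip_count Xs u v = length (filter (\<lambda>Y. u \<in> Y \<and> v \<in> Y) Xs)"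

lemma flip_count_Nil [simp]: "flip_count [] u v = 0"
  by (simp add: flip_count_def)

lemma flip_count_Cons [simp]:
  "flip_count (Y # Xs) u v = (if u \<in> Y \<and> v \<in> Y then 1 else 0) + flip_count Xs u v"
  by (simp add: flip_count_def)

lemma flip_count_append [simp]: "flip_count (Xs @ Ys) u v = flip_count Xs u v + flip_count Ys u v"
  by (simp add: flip_count_def)

lemma flip_count_commute: "flip_count Xs u v = flip_count Xs v u"
  by (induction Xs) auto

lemma flip_count_eq_0: "v \<notin> \<Union> (set Xs) \<Longrightarrow> flip_count Xs u v = 0"
  by (induction Xs) auto

lemma flip_count_map:
  "distinct xs \<Longrightarrow> flip_count (map f xs) u v = card {x \<in> set xs. u \<in> f x \<and> v \<in> f x}"
  by (simp add: flip_count_def filter_map distinct_length_filter o_def Int_def conj_commute)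

lemma mem_invert_iff:
  "(u, v) \<in> invert X D \<longleftrightarrow> (if u \<in> X \<and> v \<in> X then (v, u) \<in> D else (u, v) \<in> D)"
  unfolding invert_def by auto

lemma mem_fold_invert_iff:
  "(u, v) \<in> fold invert Xs D \<longleftrightarrow> (if even (flip_count Xs u v) then (u, v) \<in> D else (v, u) \<in> D)"
  by (induction Xs arbitrary: D) (auto simp: mem_invert_iff)

lemma orientation_swap_iff:
  "is_orientation E D \<Longrightarrow> (u, v) \<in> E \<Longrightarrow> (v, u) \<in> D \<longleftrightarrow> (u, v) \<notin> D"
  unfolding is_orientation_def by blast

lemma is_orientation_converse: "sym E \<Longrightarrow> is_orientation E D \<Longrightarrow> is_orientation E (converse D)"
  unfolding is_orientation_def sym_def by blast

lemma is_orientation_less: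
  fixes E :: "('a :: linorder \<times> 'a) set"
  shows "sym E \<Longrightarrow> irrefl E \<Longrightarrow> is_orientation E {(u, v) \<in> E. u < v}"
  unfolding is_orientation_def sym_def irrefl_def by auto (metis linorder_neqE)

lemma fold_invert_eq_iff:
  assumes "sym E" and D1: "is_orientation E D1" and D2: "is_orientation E D2"
  shows "fold invert Xs D1 = D2 \<longleftrightarrow>
    (\<forall>(u, v) \<in> E. odd (flip_count Xs u v) \<longleftrightarrow> ((u, v) \<in> D1 \<longleftrightarrow> (u, v) \<notin> D2))"
proof -
  have "(u, v) \<in> fold invert Xs D1 \<longleftrightarrow> (u, v) \<in> D2"
    if "\<forall>(u, v) \<in> E. odd (flip_count Xs u v) \<longleftrightarrow> ((u, v) \<in> D1 \<longleftrightarrow> (u, v) \<notin> D2)" for u v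
  proof (cases "(u, v) \<in> E")
    case True
    then show ?thesis
      using that orientation_swap_iff[OF D1 True] by (auto simp: mem_fold_invert_iff)
  next
    case False
    with \<open>sym E\<close> have "(v, u) \<notin> E"
      by (auto simp: sym_def)
    with False D1 D2 show ?thesis
      unfolding is_orientation_def by (auto simp: mem_fold_invert_iff)
  qed
  moreover have "odd (flip_count Xs u v) \<longleftrightarrow> ((u, v) \<in> D1 \<longleftrightarrow> (u, v) \<notin> D2)"
    if "fold invert Xs D1 = D2" "(u, v) \<in> E" for u v
    using that orientation_swap_iff[OF D1 \<open>(u, v) \<in> E\<close>] mem_fold_invert_iff[of u v Xs D1]
    by auto
  ultimately show ?thesis
    by auto
qed

definition inversion_seq :: "nat \<Rightarrow> 'a set \<Rightarrow> 'a set list \<Rightarrow> bool" where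
  "inversion_seq p V Xs \<longleftrightarrow> (\<forall>X \<in> set Xs. X \<subseteq> V \<and> finite X \<and> card X \<le> p)"

lemma inv_dist_le:
  "inversion_seq p V Xs \<Longrightarrow> fold invert Xs D1 = D2 \<Longrightarrow> inv_dist p V D1 D2 \<le> length Xs"
  unfolding inv_dist_def inversion_seq_def by (rule Least_le) blast

lemma inv_dist_eqI:
  assumes "inversion_seq p V Xs" "fold invert Xs D1 = D2" "length Xs = m"
    and "\<And>Ys. inversion_seq p V Ys \<Longrightarrow> fold invert Ys D1 = D2 \<Longrightarrow> m \<le> length Ys"
  shows "inv_dist p V D1 D2 = m"
  unfolding inv_dist_def
proof (rule Least_equality)
  show "\<exists>Xs. length Xs = m \<and> (\<forall>X\<in>set Xs. X \<subseteq> V \<and> finite X \<and> card X \<le> p) \<and> fold invert Xs D1 = D2"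
    using assms(1-3) unfolding inversion_seq_def by blast
qed (use assms(4) in \<open>auto simp: inversion_seq_def\<close>)

lemma mem_G2_E_iff:
  "(u, v) \<in> G2_E n \<longleftrightarrow>
     (u = 0 \<and> v = 1) \<or> (u = 1 \<and> v = 0) \<or>
     (u \<in> {0, 1} \<and> v \<in> {2..<n}) \<or> (v \<in> {0, 1} \<and> u \<in> {2..<n})"
  unfolding G2_E_def Let_def by auto

lemma sym_G2_E: "sym (G2_E n)"
  unfolding sym_def by (auto simp: mem_G2_E_iff)

lemma irrefl_G2_E: "irrefl (G2_E n)"
  unfolding irrefl_def by (auto simp: mem_G2_E_iff)

lemma k_degenerate_G2: "k_degenerate (G2_V n) (G2_E n) 2"
  unfolding k_degenerate_def
proof (intro exI conjI allI impI)
  let ?vs = "rev [0..<n]"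
  show "distinct ?vs" "set ?vs = G2_V n"
    by (auto simp: G2_V_def)
  fix i assume "i < length ?vs"
  let ?later = "{j. i < j \<and> j < length ?vs \<and> (?vs ! i, ?vs ! j) \<in> G2_E n}"
  have "?later \<subseteq> {n - 2, n - 1}"
    by (auto simp: rev_nth mem_G2_E_iff)
  then have "card ?later \<le> card {n - 2, n - 1}"
    by (intro card_mono) auto
  also have "\<dots> \<le> 2"
    by (simp add: card_insert_if)
  finally show "card ?later \<le> 2" .
qed

lemma fold_invert_G2_iff:
  assumes D1: "is_orientation (G2_E n) D1" and D2: "is_orientation (G2_E n) D2"
  shows "fold invert Xs D1 = D2 \<longleftrightarrow>
    (odd (flip_count Xs 0 1) \<longleftrightarrow> ((0, 1) \<in> D1 \<longleftrightarrow> (0, 1) \<notin> D2)) \<and>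
    (\<forall>x \<in> {2..<n}. \<forall>a \<in> {0, 1}.
       odd (flip_count Xs a x) \<longleftrightarrow> ((a, x) \<in> D1 \<longleftrightarrow> (a, x) \<notin> D2))"
proof -
  have swap: "(odd (flip_count Xs v u) \<longleftrightarrow> ((v, u) \<in> D1 \<longleftrightarrow> (v, u) \<notin> D2)) \<longleftrightarrow>
      (odd (flip_count Xs u v) \<longleftrightarrow> ((u, v) \<in> D1 \<longleftrightarrow> (u, v) \<notin> D2))"
    if "(u, v) \<in> G2_E n" for u v
    using orientation_swap_iff[OF D1 that] orientation_swap_iff[OF D2 that] flip_count_commute[of Xs u v]
    by auto
  show ?thesis
    unfolding fold_invert_eq_iff[OF sym_G2_E D1 D2]
  proof
    assume "\<forall>(u, v) \<in> G2_E n. odd (flip_count Xs u v) \<longleftrightarrow> ((u, v) \<in> D1 \<longleftrightarrow> (u, v) \<notin> D2)"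
    then show "(odd (flip_count Xs 0 1) \<longleftrightarrow> ((0, 1) \<in> D1 \<longleftrightarrow> (0, 1) \<notin> D2)) \<and>
      (\<forall>x \<in> {2..<n}. \<forall>a \<in> {0, 1}.
         odd (flip_count Xs a x) \<longleftrightarrow> ((a, x) \<in> D1 \<longleftrightarrow> (a, x) \<notin> D2))"
      by (auto simp: mem_G2_E_iff)
  next
    assume hyp: "(odd (flip_count Xs 0 1) \<longleftrightarrow> ((0, 1) \<in> D1 \<longleftrightarrow> (0, 1) \<notin> D2)) \<and>
      (\<forall>x \<in> {2..<n}. \<forall>a \<in> {0, 1}.
         odd (flip_count Xs a x) \<longleftrightarrow> ((a, x) \<in> D1 \<longleftrightarrow> (a, x) \<notin> D2))"
    show "\<forall>(u, v) \<in> G2_E n. odd (flip_count Xs u v) \<longleftrightarrow> ((u, v) \<in> D1 \<longleftrightarrow> (u, v) \<notin> D2)"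
    proof (intro ballI, clarify)
      fix u v
      assume uv: "(u, v) \<in> G2_E n"
      show "odd (flip_count Xs u v) \<longleftrightarrow> ((u, v) \<in> D1 \<longleftrightarrow> (u, v) \<notin> D2)"
      proof (cases "u < v")
        case True
        with uv have "(u = 0 \<and> v = 1) \<or> (u \<in> {0, 1} \<and> v \<in> {2..<n})"
          by (auto simp: mem_G2_E_iff)
        with hyp show ?thesis
          by blast
      next
        case False
        with uv have "(v = 0 \<and> u = 1) \<or> (v \<in> {0, 1} \<and> u \<in> {2..<n})"
          by (auto simp: mem_G2_E_iff)
        with hyp swap[OF uv] show ?thesis
          by blast
      qed
    qed
  qed
qed

lemma G2_inversion_seq_exists:
  assumes "n \<ge> 2" and D1: "is_orientation (G2_E n) D1" and D2: "is_orientation (G2_E n) D2"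
  obtains Xs where "length Xs = n - 1" "inversion_seq 3 (G2_V n) Xs" "fold invert Xs D1 = D2"
proof -
  define differ where "differ a x \<longleftrightarrow> ((a, x) \<in> D1 \<longleftrightarrow> (a, x) \<notin> D2)" for a x :: nat
  define fix_at where "fix_at x = insert x {a \<in> {0, 1}. differ a x}" for x :: nat
  define T where "T = {x \<in> {2..<n}. differ 0 x \<and> differ 1 x}"
  define fix_01 :: "nat set" where "fix_01 = (if odd (card T) \<longleftrightarrow> differ 0 1 then {} else {0, 1})"
  define Xs where "Xs = map fix_at [2..<n] @ [fix_01]"
  have "length Xs = n - 1"
    using \<open>n \<ge> 2\<close> by (simp add: Xs_def)
  moreover have "inversion_seq 3 (G2_V n) Xs"
  proof -
    have two: "card {a \<in> {0, 1}. differ a x} \<le> 2" for x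
      using card_mono[of "{0, 1}" "{a \<in> {0, 1}. differ a x}"] by (auto simp: numeral_2_eq_2)
    have "fix_at x \<subseteq> G2_V n \<and> finite (fix_at x) \<and> card (fix_at x) \<le> 3" if "x < n" for x
      using two[of x] that \<open>n \<ge> 2\<close> by (auto simp: fix_at_def G2_V_def card_insert_if)
    then show ?thesis
      using \<open>n \<ge> 2\<close> by (auto simp: inversion_seq_def Xs_def fix_01_def G2_V_def)
  qed
  moreover have "fold invert Xs D1 = D2"
    unfolding fold_invert_G2_iff[OF D1 D2]
  proof (intro conjI ballI)
    have "{y \<in> set [2..<n]. 0 \<in> fix_at y \<and> 1 \<in> fix_at y} = T"
      by (auto simp: fix_at_def T_def)
    then have "flip_count Xs 0 1 = card T + (if odd (card T) \<longleftrightarrow> differ 0 1 then 0 else 1)"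
      by (simp add: Xs_def flip_count_map fix_01_def)
    then show "odd (flip_count Xs 0 1) \<longleftrightarrow> ((0, 1) \<in> D1 \<longleftrightarrow> (0, 1) \<notin> D2)"
      by (auto simp: differ_def)
  next
    fix x a assume x: "x \<in> {2..<n}" and a: "a \<in> {0, 1 :: nat}"
    have "{y \<in> set [2..<n]. a \<in> fix_at y \<and> x \<in> fix_at y} = (if differ a x then {x} else {})"
      using x a by (auto simp: fix_at_def)
    moreover have "x \<notin> fix_01"
      using x by (auto simp: fix_01_def)
    ultimately have "flip_count Xs a x = (if differ a x then 1 else 0)"
      by (simp add: Xs_def flip_count_map)
    then show "odd (flip_count Xs a x) \<longleftrightarrow> ((a, x) \<in> D1 \<longleftrightarrow> (a, x) \<notin> D2)"
      by (simp add: differ_def)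
  qed
  ultimately show thesis
    using that by blast
qed

lemma inv_dist_G2_le:
  assumes "n \<ge> 2" "is_orientation (G2_E n) D1" "is_orientation (G2_E n) D2"
  shows "inv_dist 3 (G2_V n) D1 D2 \<le> n - 1"
  using G2_inversion_seq_exists[OF assms] inv_dist_le by metis

definition X_flip_count :: "nat \<Rightarrow> nat \<Rightarrow> nat set list \<Rightarrow> nat" where
  "X_flip_count n a Xs = (\<Sum>x\<in>{2..<n}. flip_count Xs a x)"

lemma X_flip_count_append:
  "X_flip_count n a (Xs @ Ys) = X_flip_count n a Xs + X_flip_count n a Ys"
  by (simp add: X_flip_count_def sum.distrib)

lemma X_flip_count_single:
  "X_flip_count n a [Y] = (if a \<in> Y then card (Y \<inter> {2..<n}) else 0)"
  by (simp add: X_flip_count_def sum.If_cases Int_commute)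

(* Each inversion of at most three vertices adds at most 2 to this weight (the parity term
   detects the inversions meeting at most one edge at X). *)
definition flip_weight :: "nat \<Rightarrow> nat set list \<Rightarrow> nat" where
  "flip_weight n Xs =
     X_flip_count n 0 Xs + X_flip_count n 1 Xs + (X_flip_count n 0 Xs + flip_count Xs 0 1) mod 2"

lemma flip_weight_append_le: "flip_weight n (Xs @ Ys) \<le> flip_weight n Xs + flip_weight n Ys"
proof -
  have "(p + q) mod 2 \<le> p mod 2 + q mod 2" for p q :: nat
    by (metis mod_add_eq mod_less_eq_dividend)
  from this[of "X_flip_count n 0 Xs + flip_count Xs 0 1" "X_flip_count n 0 Ys + flip_count Ys 0 1"]
  show ?thesis
    unfolding flip_weight_def X_flip_count_append flip_count_append by (simp add: ac_simps)
qed

lemma flip_weight_single_le: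
  assumes "finite Y" "card Y \<le> 3"
  shows "flip_weight n [Y] \<le> 2"
proof -
  define k where "k = card (Y \<inter> {2..<n})"
  have "k + card (Y \<inter> {0, 1}) = card (Y \<inter> {2..<n} \<union> Y \<inter> {0, 1})"
    unfolding k_def using assms by (intro card_Un_disjoint[symmetric]) auto
  also have "\<dots> \<le> card Y"
    using assms by (intro card_mono) auto
  finally have "k + card (Y \<inter> {0, 1}) \<le> 3"
    using assms by linarith
  moreover have "card (Y \<inter> {0, 1}) = (if 0 \<in> Y then 1 else 0) + (if 1 \<in> Y then 1 else 0)"
    by (auto simp: Int_insert_right)
  ultimately show ?thesis
    by (auto simp: flip_weight_def X_flip_count_single k_def[symmetric]) presburger+
qed

lemma flip_weight_le:
  "\<forall>Y \<in> set Xs. finite Y \<and> card Y \<le> 3 \<Longrightarrow> flip_weight n Xs \<le> 2 * length Xs"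
proof (induction Xs)
  case Nil
  then show ?case
    by (simp add: flip_weight_def X_flip_count_def)
next
  case (Cons Y Xs)
  then show ?case
    using flip_weight_append_le[of n "[Y]" Xs] flip_weight_single_le[of Y n] by simp
qed

lemma G2_flip_lower_bound:
  assumes "n \<ge> 2" and small: "\<forall>Y \<in> set Xs. finite Y \<and> card Y \<le> 3"
    and odd: "\<And>a x. a \<in> {0, 1} \<Longrightarrow> x \<in> {2..<n} \<Longrightarrow> odd (flip_count Xs a x)"
  shows "2 * (n - 2) + (n + flip_count Xs 0 1) mod 2 \<le> 2 * length Xs"
proof -
  have X_flips: "n - 2 \<le> X_flip_count n a Xs" if "a \<in> {0, 1}" for a
    using sum_bounded_below[of "{2..<n}" 1 "flip_count Xs a"] odd[OF that] odd_pos
    by (fastforce simp: X_flip_count_def)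
  have parity: "(X_flip_count n 0 Xs + flip_count Xs 0 1) mod 2 = (n + flip_count Xs 0 1) mod 2"
  proof -
    have "{x \<in> {2..<n}. odd (flip_count Xs 0 x)} = {2..<n}"
      using odd by auto
    then have "even (X_flip_count n 0 Xs + n)"
      using \<open>n \<ge> 2\<close> by (simp add: X_flip_count_def even_sum_iff)
    moreover have "even (a + n) \<Longrightarrow> (a + c) mod 2 = (n + c) mod 2" for a c :: nat
      by presburger
    ultimately show ?thesis
      by blast
  qed
  have "n - 2 \<le> X_flip_count n 0 Xs" "n - 2 \<le> X_flip_count n 1 Xs"
    using X_flips by blast+
  then show ?thesis
    using flip_weight_le[OF small, of n] parity
    unfolding flip_weight_def by linarith
qed

lemma G2_inversion_seq_length_ge:
  assumes "n \<ge> 2"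
    and D1: "is_orientation (G2_E n) D1" and D2: "is_orientation (G2_E n) D2"
    and Xs: "inversion_seq 3 (G2_V n) Xs" "fold invert Xs D1 = D2"
    and X_reversed: "\<forall>x \<in> {2..<n}. \<forall>a \<in> {0, 1}. (a, x) \<in> D1 \<longleftrightarrow> (a, x) \<notin> D2"
  shows "n - 2 \<le> length Xs"
    and "((0, 1) \<in> D1 \<longleftrightarrow> (0, 1) \<notin> D2) \<longleftrightarrow> even n \<Longrightarrow> n - 1 \<le> length Xs"
proof -
  have flips: "odd (flip_count Xs 0 1) \<longleftrightarrow> ((0, 1) \<in> D1 \<longleftrightarrow> (0, 1) \<notin> D2)"
    "\<And>a x. a \<in> {0, 1} \<Longrightarrow> x \<in> {2..<n} \<Longrightarrow> odd (flip_count Xs a x)"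
    using Xs(2) X_reversed unfolding fold_invert_G2_iff[OF D1 D2] by blast+
  have "\<forall>Y \<in> set Xs. finite Y \<and> card Y \<le> 3"
    using Xs(1) by (simp add: inversion_seq_def)
  then have bound: "2 * (n - 2) + (n + flip_count Xs 0 1) mod 2 \<le> 2 * length Xs"
    by (rule G2_flip_lower_bound[OF \<open>n \<ge> 2\<close> _ flips(2)])
  then show "n - 2 \<le> length Xs"
    by linarith
  assume "((0, 1) \<in> D1 \<longleftrightarrow> (0, 1) \<notin> D2) \<longleftrightarrow> even n"
  with flips(1) have "odd (flip_count Xs 0 1) \<longleftrightarrow> even n"
    by blast
  then have "(n + flip_count Xs 0 1) mod 2 = 1"
    by presburger
  with bound show "n - 1 \<le> length Xs"
    by linarith
qed

lemma inv_dist_G2_eq: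
  assumes "n \<ge> 2"
    and D1: "is_orientation (G2_E n) D1" and D2: "is_orientation (G2_E n) D2"
    and X_reversed: "\<forall>x \<in> {2..<n}. \<forall>a \<in> {0, 1}. (a, x) \<in> D1 \<longleftrightarrow> (a, x) \<notin> D2"
    and "((0, 1) \<in> D1 \<longleftrightarrow> (0, 1) \<notin> D2) \<longleftrightarrow> even n"
  shows "inv_dist 3 (G2_V n) D1 D2 = n - 1"
proof -
  obtain Xs where "length Xs = n - 1" "inversion_seq 3 (G2_V n) Xs" "fold invert Xs D1 = D2"
    using G2_inversion_seq_exists[OF \<open>n \<ge> 2\<close> D1 D2] .
  then show ?thesis
    using G2_inversion_seq_length_ge(2)[OF \<open>n \<ge> 2\<close> D1 D2 _ _ X_reversed] assms(5)
    by (intro inv_dist_eqI) auto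
qed

fun odd_converse_seq :: "nat \<Rightarrow> nat set list" where
  "odd_converse_seq 0 = [{0, 1, 2}]"
| "odd_converse_seq (Suc k) = odd_converse_seq k @ [{0, 2 * k + 3, 2 * k + 4}, {1, 2 * k + 3, 2 * k + 4}]"

lemma length_odd_converse_seq [simp]: "length (odd_converse_seq k) = 2 * k + 1"
  by (induction k) auto

lemma odd_converse_seq_subset:
  "Y \<in> set (odd_converse_seq k) \<Longrightarrow> Y \<subseteq> {..<2 * k + 3} \<and> finite Y \<and> card Y \<le> 3"
  by (induction k) (fastforce simp: card_insert_if)+

lemma flip_count_odd_converse_seq:
  "a < 2 \<Longrightarrow> a < x \<Longrightarrow> x < 2 * k + 3 \<Longrightarrow> flip_count (odd_converse_seq k) a x = 1"
proof (induction k arbitrary: x)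
  case 0
  then show ?case
    by auto
next
  case (Suc k)
  show ?case
  proof (cases "x < 2 * k + 3")
    case True
    then show ?thesis
      using Suc by auto
  next
    case False
    then have "flip_count (odd_converse_seq k) a x = 0"
      using odd_converse_seq_subset[of _ k] by (intro flip_count_eq_0) fastforce
    then show ?thesis
      using Suc.prems False by auto
  qed
qed

lemma inv_dist_converse_G2:
  assumes "n \<ge> 2" and D: "is_orientation (G2_E n) D"
  shows "inv_dist 3 (G2_V n) D (converse D) = (if even n then n - 1 else n - 2)"
proof -
  have D': "is_orientation (G2_E n) (converse D)"
    using is_orientation_converse[OF sym_G2_E D] .
  have reversed: "(a, x) \<in> D \<longleftrightarrow> (a, x) \<notin> converse D"
    if "a \<in> {0, 1}" "x \<in> {1..<n}" "a < x" for a x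
  proof -
    from that have "(a, x) \<in> G2_E n"
      by (auto simp: mem_G2_E_iff)
    from orientation_swap_iff[OF D this] show ?thesis
      by simp
  qed
  have X_reversed: "\<forall>x \<in> {2..<n}. \<forall>a \<in> {0, 1}. (a, x) \<in> D \<longleftrightarrow> (a, x) \<notin> converse D"
    using reversed by auto
  show ?thesis
  proof (cases "even n")
    case True
    moreover have "(0, 1) \<in> D \<longleftrightarrow> (0, 1) \<notin> converse D"
      using reversed \<open>n \<ge> 2\<close> by auto
    ultimately have "inv_dist 3 (G2_V n) D (converse D) = n - 1"
      using inv_dist_G2_eq[OF \<open>n \<ge> 2\<close> D D' X_reversed] by blast
    with True show ?thesis
      by simp
  next
    case False
    with \<open>n \<ge> 2\<close> have "\<exists>k. n = 2 * k + 3"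
      by presburger
    then obtain k where k: "n = 2 * k + 3" ..
    let ?Xs = "odd_converse_seq k"
    have flips: "odd (flip_count ?Xs a x) \<longleftrightarrow> ((a, x) \<in> D \<longleftrightarrow> (a, x) \<notin> converse D)"
      if "a \<in> {0, 1}" "x \<in> {1..<n}" "a < x" for a x
      using reversed[OF that] flip_count_odd_converse_seq[of a x k] that k by auto
    have "fold invert ?Xs D = converse D"
      unfolding fold_invert_G2_iff[OF D D'] using \<open>n \<ge> 2\<close> by (intro conjI ballI flips) auto
    moreover have "inversion_seq 3 (G2_V n) ?Xs"
      using odd_converse_seq_subset[of _ k] k by (auto simp: inversion_seq_def G2_V_def)
    ultimately have "inv_dist 3 (G2_V n) D (converse D) = n - 2"
      using G2_inversion_seq_length_ge(1)[OF \<open>n \<ge> 2\<close> D D' _ _ X_reversed] k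
      by (intro inv_dist_eqI) auto
    with False show ?thesis
      by simp
  qed
qed

lemma id_le_G2:
  assumes "n \<ge> 2"
  shows "id_le 3 (G2_V n) (G2_E n) = n - 1"
proof -
  define S where "S = {inv_dist 3 (G2_V n) D1 D2 | D1 D2.
    is_orientation (G2_E n) D1 \<and> is_orientation (G2_E n) D2}"
  define D_up where "D_up = {(u, v) \<in> G2_E n. u < v}"
  (* reverses every edge of D_up at X, and u1u2 iff n is even *)
  define D_far where "D_far = {(u, v) \<in> G2_E n. u < v \<longleftrightarrow> u < 2 \<and> v < 2 \<and> odd n}"
  have D_up: "is_orientation (G2_E n) D_up"
    unfolding D_up_def by (rule is_orientation_less[OF sym_G2_E irrefl_G2_E])
  have D_far: "is_orientation (G2_E n) D_far"
    unfolding D_far_def is_orientation_def by (auto simp: mem_G2_E_iff)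
  have "inv_dist 3 (G2_V n) D_up D_far = n - 1"
    by (intro inv_dist_G2_eq[OF \<open>n \<ge> 2\<close> D_up D_far]) (auto simp: D_up_def D_far_def mem_G2_E_iff)
  then have "n - 1 \<in> S"
    unfolding S_def using D_up D_far by (metis (mono_tags, lifting) mem_Collect_eq)
  moreover have bounded: "S \<subseteq> {..n - 1}"
    unfolding S_def using inv_dist_G2_le[OF \<open>n \<ge> 2\<close>] by auto
  ultimately have "Max S = n - 1"
    by (intro Max_eqI) (auto intro: finite_subset[OF bounded])
  then show ?thesis
    by (simp add: id_le_def S_def)
qed

theorem mainTheorem17:
  fixes n :: nat
  assumes "n \<ge> 2"
  shows "k_degenerate (G2_V n) (G2_E n) 2
       \<and> id_le 3 (G2_V n) (G2_E n) = n - 1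
       \<and> conv_le 3 (G2_V n) (G2_E n) = (if even n then n - 1 else n - 2)"
proof (intro conjI)
  show "k_degenerate (G2_V n) (G2_E n) 2"
    by (rule k_degenerate_G2)
  show "id_le 3 (G2_V n) (G2_E n) = n - 1"
    using assms by (rule id_le_G2)
  have "is_orientation (G2_E n) (SOME D. is_orientation (G2_E n) D)"
    using is_orientation_less[OF sym_G2_E irrefl_G2_E] by (rule someI)
  then show "conv_le 3 (G2_V n) (G2_E n) = (if even n then n - 1 else n - 2)"
    unfolding conv_le_def Let_def by (rule inv_dist_converse_G2[OF assms])
qed

end
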